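(* Let $D$ be a digraph (finite, without loops, parallel arcs or digons) and let $S(D)$ be a skeleton of $D$ that admits a simple dicycle intersection graph. If $v\in V(S(D))$ satisfies $d^{+}_{D}(v)=d^{+}_{S(D)}(v)$, then $v\in SV(D)$, i.e. $|N^{+2}_D(v)|\ge|N^{+}_D(v)|$.
   Context: All digraphs are finite, with no loops, no parallel arcs and no digons (a digon is a pair of arcs $u\to w$, $w\to u$). For a digraph $H$ and vertex $v$, $N^{+}_H(v)$ is the set of out-neighbours of $v$ in $H$, $d^{+}_H(v)=|N^{+}_H(v)|$, and $N^{+2}_H(v)$ is the set of vertices $w\notin N^{+}_H(v)\cup\{v\}$ such that $u\to w$ is an arc of $H$ for some $u\in N^{+}_H(v)$; $SV(H)$ is the set of $v$ with $|N^{+2}_H(v)|\ge|N^{+}_H(v)|$. An Eulerian digraph is a (weakly) connected digraph with at least one arc in which $d^{+}(x)=d^{-}(x)$ for every vertex. A skeleton of $D$ is a maximal Eulerian subdigraph of $D$. A cycle decomposition of an Eulerian digraph is a set of dicycles whose arc sets partition its arc set; its dicycle intersection graph is the multigraph whose vertices are these dicycles, with one edge between distinct dicycles $C,C'$ for each vertex lying on both. An Eulerian digraph admits a simple dicycle intersection graph if it has a cycle decomposition whose dicycle intersection graph has no parallel edges (any two distinct dicycles share at most one vertex). *)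

theory Defs
  imports Main
begin

text \<open>A digraph is a pair (V, A): a finite vertex set V and an arc relation A on V,
  without loops and without digons (hence without parallel arcs, A being a set).\<close>
definition digraph :: "'a set \<Rightarrow> ('a \<times> 'a) set \<Rightarrow> bool" where
  "digraph V A \<longleftrightarrow> finite V \<and> A \<subseteq> V \<times> V \<and> (\<forall>x. (x, x) \<notin> A)
     \<and> (\<forall>u w. (u, w) \<in> A \<longrightarrow> (w, u) \<notin> A)"

definition out_nbrs :: "('a \<times> 'a) set \<Rightarrow> 'a \<Rightarrow> 'a set" where
  "out_nbrs A v = {w. (v, w) \<in> A}"

definition in_nbrs :: "('a \<times> 'a) set \<Rightarrow> 'a \<Rightarrow> 'a set" where
  "in_nbrs A v = {u. (u, v) \<in> A}"

definition outdeg :: "('a \<times> 'a) set \<Rightarrow> 'a \<Rightarrow> nat" where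
  "outdeg A v = card (out_nbrs A v)"

definition indeg :: "('a \<times> 'a) set \<Rightarrow> 'a \<Rightarrow> nat" where
  "indeg A v = card (in_nbrs A v)"

definition second_out_nbrs :: "('a \<times> 'a) set \<Rightarrow> 'a \<Rightarrow> 'a set" where
  "second_out_nbrs A v =
     {w. w \<notin> out_nbrs A v \<and> w \<noteq> v \<and> (\<exists>u \<in> out_nbrs A v. (u, w) \<in> A)}"

definition SV :: "'a set \<Rightarrow> ('a \<times> 'a) set \<Rightarrow> 'a set" where
  "SV V A = {v \<in> V. card (second_out_nbrs A v) \<ge> card (out_nbrs A v)}"

definition subdigraph :: "'a set \<Rightarrow> ('a \<times> 'a) set \<Rightarrow> 'a set \<Rightarrow> ('a \<times> 'a) set \<Rightarrow> bool" where
  "subdigraph W B V A \<longleftrightarrow> W \<subseteq> V \<and> B \<subseteq> A \<and> B \<subseteq> W \<times> W"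

definition weakly_connected :: "'a set \<Rightarrow> ('a \<times> 'a) set \<Rightarrow> bool" where
  "weakly_connected W B \<longleftrightarrow> (\<forall>x \<in> W. \<forall>y \<in> W. (x, y) \<in> (B \<union> B\<inverse>)\<^sup>*)"

definition eulerian :: "'a set \<Rightarrow> ('a \<times> 'a) set \<Rightarrow> bool" where
  "eulerian W B \<longleftrightarrow> B \<subseteq> W \<times> W \<and> weakly_connected W B \<and> B \<noteq> {}
     \<and> (\<forall>x \<in> W. outdeg B x = indeg B x)"

definition skeleton :: "'a set \<Rightarrow> ('a \<times> 'a) set \<Rightarrow> 'a set \<Rightarrow> ('a \<times> 'a) set \<Rightarrow> bool" where
  "skeleton V A W B \<longleftrightarrow> subdigraph W B V A \<and> eulerian W B \<and>
     \<not> (\<exists>W' B'. subdigraph W' B' V A \<and> eulerian W' B' \<and> W \<subseteq> W' \<and> B \<subseteq> B'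
                 \<and> (W, B) \<noteq> (W', B'))"

definition cycle_arcs :: "'a list \<Rightarrow> ('a \<times> 'a) set" where
  "cycle_arcs vs = {(vs ! i, vs ! ((i + 1) mod length vs)) | i. i < length vs}"

definition is_dicycle :: "('a \<times> 'a) set \<Rightarrow> ('a \<times> 'a) set \<Rightarrow> bool" where
  "is_dicycle B C \<longleftrightarrow> (\<exists>vs. distinct vs \<and> length vs \<ge> 2 \<and> C = cycle_arcs vs) \<and> C \<subseteq> B"

definition cycle_vertices :: "('a \<times> 'a) set \<Rightarrow> 'a set" where
  "cycle_vertices C = fst ` C"

definition cycle_decomposition :: "('a \<times> 'a) set \<Rightarrow> ('a \<times> 'a) set set \<Rightarrow> bool" where
  "cycle_decomposition B \<C> \<longleftrightarrow> (\<forall>C \<in> \<C>. is_dicycle B C) \<and> \<Union>\<C> = B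
     \<and> (\<forall>C \<in> \<C>. \<forall>C' \<in> \<C>. C \<noteq> C' \<longrightarrow> C \<inter> C' = {})"

definition admits_simple_dig :: "'a set \<Rightarrow> ('a \<times> 'a) set \<Rightarrow> bool" where
  "admits_simple_dig W B \<longleftrightarrow> eulerian W B \<and> (\<exists>\<C>. cycle_decomposition B \<C> \<and>
     (\<forall>C \<in> \<C>. \<forall>C' \<in> \<C>. C \<noteq> C' \<longrightarrow> card (cycle_vertices C \<inter> cycle_vertices C') \<le> 1))"

end

theory Submission
  imports Defs
begin

text \<open>All arcs out of v lie in the skeleton, and its cycle decomposition sends each out-arc
  (v, u) along a dicycle to an arc (u, w). Since two dicycles share at most one vertex and there
  are no digons, w is neither v nor an out-neighbour of v, and distinct u give distinct w.
  This injects N+(v) into N+2(v).\<close>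

lemma mem_cycle_arcs:
  "(x, y) \<in> cycle_arcs vs \<longleftrightarrow>
     (\<exists>i < length vs. x = vs ! i \<and> y = vs ! ((i + 1) mod length vs))"
  unfolding cycle_arcs_def by auto

lemma finite_cycle_arcs: "finite (cycle_arcs vs)"
proof -
  have "cycle_arcs vs = (\<lambda>i. (vs ! i, vs ! ((i + 1) mod length vs))) ` {..<length vs}"
    unfolding cycle_arcs_def by auto
  then show ?thesis by simp
qed

lemma cycle_arcs_succ_exists:
  assumes "(x, y) \<in> cycle_arcs vs"
  shows "\<exists>z. (y, z) \<in> cycle_arcs vs"
proof -
  obtain i where i: "i < length vs" "y = vs ! ((i + 1) mod length vs)"
    using assms unfolding mem_cycle_arcs by blast
  define j where "j = (i + 1) mod length vs"
  have "j < length vs"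
    unfolding j_def using i(1) by (metis mod_less_divisor not_less_zero neq0_conv)
  then have "(vs ! j, vs ! ((j + 1) mod length vs)) \<in> cycle_arcs vs"
    unfolding mem_cycle_arcs by blast
  then show ?thesis using i(2) unfolding j_def by blast
qed

lemma cycle_arcs_succ_unique:
  assumes "distinct vs" "(x, y) \<in> cycle_arcs vs" "(x, z) \<in> cycle_arcs vs"
  shows "y = z"
proof -
  obtain i where i: "i < length vs" "x = vs ! i" "y = vs ! ((i + 1) mod length vs)"
    using assms(2) unfolding mem_cycle_arcs by blast
  obtain j where j: "j < length vs" "x = vs ! j" "z = vs ! ((j + 1) mod length vs)"
    using assms(3) unfolding mem_cycle_arcs by blast
  have "i = j" using nth_eq_iff_index_eq[OF assms(1) i(1) j(1)] i(2) j(2) by simp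
  then show ?thesis using i(3) j(3) by simp
qed

lemma is_dicycle_finite: "is_dicycle B C \<Longrightarrow> finite C"
  unfolding is_dicycle_def by (auto simp only: finite_cycle_arcs)

lemma is_dicycle_succ_exists: "is_dicycle B C \<Longrightarrow> (x, y) \<in> C \<Longrightarrow> \<exists>z. (y, z) \<in> C"
  unfolding is_dicycle_def by (auto intro: cycle_arcs_succ_exists)

lemma is_dicycle_succ_unique: "is_dicycle B C \<Longrightarrow> (x, y) \<in> C \<Longrightarrow> (x, z) \<in> C \<Longrightarrow> y = z"
  unfolding is_dicycle_def by (auto intro: cycle_arcs_succ_unique)

lemma is_dicycle_arc_vertices:
  assumes "is_dicycle B C" "(x, y) \<in> C"
  shows "x \<in> cycle_vertices C" "y \<in> cycle_vertices C"
proof -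
  obtain z where "(y, z) \<in> C" using is_dicycle_succ_exists[OF assms] by blast
  then show "x \<in> cycle_vertices C" "y \<in> cycle_vertices C"
    using assms(2) unfolding cycle_vertices_def by force+
qed

lemma digraph_finite_arcs: "digraph V A \<Longrightarrow> finite A"
  unfolding digraph_def by (meson finite_SigmaI finite_subset)

lemma finite_out_nbrs: "finite A \<Longrightarrow> finite (out_nbrs A v)"
  unfolding out_nbrs_def
  by (rule finite_subset[OF _ finite_imageI[of A snd]]) force+

lemma finite_second_out_nbrs: "finite A \<Longrightarrow> finite (second_out_nbrs A v)"
  unfolding second_out_nbrs_def
  by (rule finite_subset[OF _ finite_imageI[of A snd]]) force+

lemma out_nbrs_eq_if_outdeg_eq:
  assumes "finite A" "B \<subseteq> A" "outdeg A v = outdeg B v"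
  shows "out_nbrs A v = out_nbrs B v"
proof -
  have "out_nbrs B v \<subseteq> out_nbrs A v" using assms(2) unfolding out_nbrs_def by auto
  then show ?thesis
    using card_subset_eq[OF finite_out_nbrs[OF assms(1)]] assms(3) unfolding outdeg_def
    by (metis (no_types))
qed

locale simple_cycle_decomposition =
  fixes B :: "('a \<times> 'a) set" and \<C> :: "('a \<times> 'a) set set"
  assumes decomposition: "cycle_decomposition B \<C>"
    and simple: "\<And>C C'. C \<in> \<C> \<Longrightarrow> C' \<in> \<C> \<Longrightarrow> C \<noteq> C' \<Longrightarrow>
                   card (cycle_vertices C \<inter> cycle_vertices C') \<le> 1"
begin

lemma dicycle: "C \<in> \<C> \<Longrightarrow> is_dicycle B C"
  using decomposition unfolding cycle_decomposition_def by blast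

lemma arc_in_cycle: "(x, y) \<in> B \<Longrightarrow> \<exists>C \<in> \<C>. (x, y) \<in> C"
  using decomposition unfolding cycle_decomposition_def by blast

lemma cycle_subset: "C \<in> \<C> \<Longrightarrow> C \<subseteq> B"
  using dicycle unfolding is_dicycle_def by blast

lemma cycle_eq_if_two_common_vertices:
  assumes "C \<in> \<C>" "C' \<in> \<C>" "x \<noteq> y"
    and "x \<in> cycle_vertices C" "y \<in> cycle_vertices C"
    and "x \<in> cycle_vertices C'" "y \<in> cycle_vertices C'"
  shows "C = C'"
proof (rule ccontr)
  assume "C \<noteq> C'"
  have "finite (cycle_vertices C)"
    using is_dicycle_finite[OF dicycle[OF assms(1)]] unfolding cycle_vertices_def by simp
  then have "card {x, y} \<le> card (cycle_vertices C \<inter> cycle_vertices C')"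
    using assms(4-7) by (intro card_mono) auto
  with simple[OF assms(1,2) \<open>C \<noteq> C'\<close>] \<open>x \<noteq> y\<close> show False by simp
qed

lemma two_step_in_second_out_nbrs:
  assumes "digraph V A" "B \<subseteq> A" "out_nbrs A v = out_nbrs B v"
    and C: "C \<in> \<C>" "(v, u) \<in> C" "(u, w) \<in> C"
  shows "w \<in> second_out_nbrs A v"
proof -
  have vu: "(v, u) \<in> A" and uw: "(u, w) \<in> A" using C cycle_subset assms(2) by blast+
  have "w \<noteq> v" and "w \<noteq> u" using uw vu assms(1) unfolding digraph_def by blast+
  have "w \<notin> out_nbrs A v"
  proof
    assume "w \<in> out_nbrs A v"
    then have "(v, w) \<in> B" using assms(3) unfolding out_nbrs_def by auto
    then obtain C' where C': "C' \<in> \<C>" "(v, w) \<in> C'" using arc_in_cycle by blast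
    have "C = C'"
      by (rule cycle_eq_if_two_common_vertices[OF C(1) C'(1) \<open>w \<noteq> v\<close>[symmetric]])
        (use C C' is_dicycle_arc_vertices[OF dicycle] in blast)+
    then show False
      using is_dicycle_succ_unique[OF dicycle[OF C(1)] C(2)] C'(2) \<open>w \<noteq> u\<close> by simp
  qed
  with vu uw \<open>w \<noteq> v\<close> show ?thesis unfolding second_out_nbrs_def out_nbrs_def by blast
qed

lemma two_step_determines_middle:
  assumes "w \<noteq> v"
    and C1: "C1 \<in> \<C>" "(v, u1) \<in> C1" "(u1, w) \<in> C1"
    and C2: "C2 \<in> \<C>" "(v, u2) \<in> C2" "(u2, w) \<in> C2"
  shows "u1 = u2"
proof -
  have "C1 = C2"
    by (rule cycle_eq_if_two_common_vertices[OF C1(1) C2(1) assms(1)[symmetric]])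
      (use C1 C2 is_dicycle_arc_vertices[OF dicycle] in blast)+
  then show ?thesis using is_dicycle_succ_unique[OF dicycle[OF C1(1)] C1(2)] C2(2) by simp
qed

lemma card_out_nbrs_le_card_second_out_nbrs:
  assumes "digraph V A" "B \<subseteq> A" "out_nbrs A v = out_nbrs B v"
  shows "card (out_nbrs A v) \<le> card (second_out_nbrs A v)"
proof -
  define succ where "succ u = (SOME w. \<exists>C \<in> \<C>. (v, u) \<in> C \<and> (u, w) \<in> C)" for u
  have succ: "\<exists>C \<in> \<C>. (v, u) \<in> C \<and> (u, succ u) \<in> C" if "u \<in> out_nbrs A v" for u
  proof -
    have "(v, u) \<in> B" using that assms(3) unfolding out_nbrs_def by simp
    then obtain C where C: "C \<in> \<C>" "(v, u) \<in> C" using arc_in_cycle by blast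
    then obtain w where "(u, w) \<in> C" using is_dicycle_succ_exists[OF dicycle] by blast
    with C have "\<exists>w. \<exists>C \<in> \<C>. (v, u) \<in> C \<and> (u, w) \<in> C" by blast
    then show ?thesis unfolding succ_def by (rule someI_ex)
  qed
  have into: "succ ` out_nbrs A v \<subseteq> second_out_nbrs A v"
  proof
    fix w assume "w \<in> succ ` out_nbrs A v"
    then obtain u where "u \<in> out_nbrs A v" "w = succ u" by blast
    then obtain C where "C \<in> \<C>" "(v, u) \<in> C" "(u, w) \<in> C" using succ by blast
    then show "w \<in> second_out_nbrs A v" by (rule two_step_in_second_out_nbrs[OF assms])
  qed
  have "inj_on succ (out_nbrs A v)"
  proof (rule inj_onI)
    fix u1 u2 assume u: "u1 \<in> out_nbrs A v" "u2 \<in> out_nbrs A v" "succ u1 = succ u2"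
    have "succ u1 \<noteq> v" using into u(1) unfolding second_out_nbrs_def by blast
    obtain C1 where "C1 \<in> \<C>" "(v, u1) \<in> C1" "(u1, succ u1) \<in> C1" using succ u(1) by blast
    moreover obtain C2 where "C2 \<in> \<C>" "(v, u2) \<in> C2" "(u2, succ u1) \<in> C2"
      using succ[OF u(2)] unfolding u(3) by blast
    ultimately show "u1 = u2" by (rule two_step_determines_middle[OF \<open>succ u1 \<noteq> v\<close>])
  qed
  then show ?thesis
    by (rule card_inj_on_le[OF _ into finite_second_out_nbrs[OF digraph_finite_arcs[OF assms(1)]]])
qed

end

theorem theorem3p3:
  fixes V :: "'a set" and A :: "('a \<times> 'a) set" and W :: "'a set" and B :: "('a \<times> 'a) set"
    and v :: 'a
  assumes "digraph V A"
    and "skeleton V A W B"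
    and "admits_simple_dig W B"
    and "v \<in> W"
    and "outdeg A v = outdeg B v"
  shows "v \<in> SV V A"
proof -
  have "B \<subseteq> A" and "v \<in> V"
    using assms(2,4) unfolding skeleton_def subdigraph_def by auto
  obtain \<C> where "simple_cycle_decomposition B \<C>"
    using assms(3) unfolding admits_simple_dig_def simple_cycle_decomposition_def by blast
  moreover have "out_nbrs A v = out_nbrs B v"
    using out_nbrs_eq_if_outdeg_eq[OF digraph_finite_arcs[OF assms(1)] \<open>B \<subseteq> A\<close> assms(5)] .
  ultimately have "card (out_nbrs A v) \<le> card (second_out_nbrs A v)"
    by (rule simple_cycle_decomposition.card_out_nbrs_le_card_second_out_nbrs[OF _ assms(1) \<open>B \<subseteq> A\<close>])
  with \<open>v \<in> V\<close> show ?thesis unfolding SV_def by simp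
qed

end
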